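(* Let $\mathfrak{a}$ be a saturated ideal of ${}^b\mathbb{C}[X]={}^b\mathbb{C}[X_1,\dots,X_n]$, $A={}^b\mathbb{C}[X]/\mathfrak{a}$, and $Inf(A)$ the kernel of the standard part map $A\to A^{an}$. Then $Inf(A)^2=Inf(A)$.
   Context: ${}^*\mathbb{C}$ is an ultrapower of $\mathbb{C}$, ${}^b\mathbb{C}$ its bounded elements. ${}^b\mathbb{C}[X]$ is the ring of internal polynomials $P$ (elements of the ultrapower of $\mathbb{C}[X_1,\dots,X_n]$) with $P({}^b\mathbb{C}^n)\subset{}^b\mathbb{C}$; $\mathrm{st}:{}^b\mathbb{C}[X]\to\mathcal{O}(\mathbb{C}^n)$, $\mathrm{st}(P)(x)=$ standard part of $P(x)$ for $x\in\mathbb{C}^n$. $A^{an}:=\mathcal{O}(\mathbb{C}^n)/\overline{\mathrm{st}(\mathfrak{a})}$ (closure for the compact-open topology), and $A\to A^{an}$ is induced by $\mathrm{st}$. $\mathfrak{a}$ is saturated if $\mathrm{st}(\mathfrak{a})=\overline{\mathrm{st}(\mathfrak{a})}$. *)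

theory Defs
  imports "HOL-Analysis.Analysis" "HOL-Library.Poly_Mapping"
begin

text \<open>Polynomials in the variables X_j, j ranging over the finite type 'n
  (so n = CARD('n)), with complex coefficients: finitely supported maps from
  monomials (exponent vectors) to coefficients.\<close>
type_synonym 'n mpoly = "('n \<Rightarrow>\<^sub>0 nat) \<Rightarrow>\<^sub>0 complex"

definition moneval :: "('n \<Rightarrow>\<^sub>0 nat) \<Rightarrow> ('n \<Rightarrow> complex) \<Rightarrow> complex" where
  "moneval m x = (\<Prod>j\<in>Poly_Mapping.keys m. x j ^ Poly_Mapping.lookup m j)"

definition mpeval :: "'n mpoly \<Rightarrow> ('n \<Rightarrow> complex) \<Rightarrow> complex" where
  "mpeval p x = (\<Sum>m\<in>Poly_Mapping.keys p. Poly_Mapping.lookup p m * moneval m x)"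

text \<open>Ultrafilters on an index set; the ultrapower is taken w.r.t. a free one.\<close>
definition free_ultrafilter :: "'i filter \<Rightarrow> bool" where
  "free_ultrafilter U \<longleftrightarrow> U \<noteq> bot \<and> (\<forall>P. eventually P U \<or> eventually (\<lambda>i. \<not> P i) U)
     \<and> (\<forall>x. \<not> eventually (\<lambda>i. i = x) U)"

text \<open>Elements of *C are represented by families 'i \<Rightarrow> complex (modulo
  U-a.e. equality); internal polynomials by families 'i \<Rightarrow> 'n mpoly.\<close>
definition bounded_elt :: "'i filter \<Rightarrow> ('i \<Rightarrow> complex) \<Rightarrow> bool" where
  "bounded_elt U z \<longleftrightarrow> (\<exists>r. eventually (\<lambda>i. norm (z i) \<le> r) U)"

definition bounded_pt :: "'i filter \<Rightarrow> ('i \<Rightarrow> 'n \<Rightarrow> complex) \<Rightarrow> bool" where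
  "bounded_pt U x \<longleftrightarrow> (\<forall>j. bounded_elt U (\<lambda>i. x i j))"

text \<open>bC[X]: internal polynomials mapping bC^n into bC.\<close>
definition bpoly :: "'i filter \<Rightarrow> ('i \<Rightarrow> 'n mpoly) set" where
  "bpoly U = {P. \<forall>x. bounded_pt U x \<longrightarrow> bounded_elt U (\<lambda>i. mpeval (P i) (x i))}"

text \<open>Standard part map st : bC[X] \<rightarrow> functions on C^n; the standard part of a
  bounded element is its U-limit.\<close>
definition st_poly :: "'i filter \<Rightarrow> ('i \<Rightarrow> 'n mpoly) \<Rightarrow> ('n \<Rightarrow> complex) \<Rightarrow> complex" where
  "st_poly U P = (\<lambda>x. Lim U (\<lambda>i. mpeval (P i) x))"

text \<open>Ideals of bC[X], as sets of representatives (closed under U-a.e. equality).\<close>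
definition bideal :: "'i filter \<Rightarrow> ('i \<Rightarrow> 'n mpoly) set \<Rightarrow> bool" where
  "bideal U a \<longleftrightarrow> a \<subseteq> bpoly U \<and> (\<lambda>i. 0) \<in> a
     \<and> (\<forall>P\<in>a. \<forall>Q\<in>a. (\<lambda>i. P i + Q i) \<in> a)
     \<and> (\<forall>P\<in>a. \<forall>Q\<in>bpoly U. (\<lambda>i. Q i * P i) \<in> a)
     \<and> (\<forall>P\<in>a. \<forall>Q. eventually (\<lambda>i. P i = Q i) U \<longrightarrow> Q \<in> a)"

definition entire_fns :: "(('n::finite \<Rightarrow> complex) \<Rightarrow> complex) set" where
  "entire_fns = {f. continuous_on UNIV f \<and> (\<forall>x j. (\<lambda>z. f (x(j := z))) holomorphic_on UNIV)}"

definition co_closure :: "(('n::finite \<Rightarrow> complex) \<Rightarrow> complex) set \<Rightarrow> (('n \<Rightarrow> complex) \<Rightarrow> complex) set" where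
  "co_closure S = {f \<in> entire_fns. \<forall>K e. compact K \<and> e > 0 \<longrightarrow>
       (\<exists>g\<in>S. \<forall>x\<in>K. norm (f x - g x) < e)}"

definition saturated :: "'i filter \<Rightarrow> ('i \<Rightarrow> 'n::finite mpoly) set \<Rightarrow> bool" where
  "saturated U a \<longleftrightarrow> st_poly U ` a = co_closure (st_poly U ` a)"

text \<open>Preimage in bC[X] of Inf(A) = ker(A \<rightarrow> A^an), A = bC[X]/a.\<close>
definition inf_rep :: "'i filter \<Rightarrow> ('i \<Rightarrow> 'n::finite mpoly) set \<Rightarrow> ('i \<Rightarrow> 'n mpoly) set" where
  "inf_rep U a = {P \<in> bpoly U. st_poly U P \<in> co_closure (st_poly U ` a)}"

definition ideal_prod :: "('i \<Rightarrow> 'n mpoly) set \<Rightarrow> ('i \<Rightarrow> 'n mpoly) set \<Rightarrow> ('i \<Rightarrow> 'n mpoly) set" where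
  "ideal_prod I J = {(\<lambda>i. \<Sum>k<m. Q k i * R k i) | (m::nat) Q R. \<forall>k<m. Q k \<in> I \<and> R k \<in> J}"

end

theory Submission
  imports Defs "HOL-Computational_Algebra.Polynomial" "HOL-Complex_Analysis.Cauchy_Integral_Formula"
begin

text \<open>By saturation, \<open>P \<in> Inf(A)\<close> means exactly that \<open>st P = st Q\<close> for some \<open>Q \<in> \<aa>\<close>. Since \<open>st\<close>
  is a ring homomorphism, any \<open>P \<equiv> \<Sum> Q\<^sub>k R\<^sub>k\<close> modulo \<open>\<aa>\<close> with \<open>Q\<^sub>k, R\<^sub>k \<in> Inf(A)\<close> lies in \<open>Inf(A)\<close>:
  replacing each \<open>Q\<^sub>k\<close> by an \<open>A\<^sub>k \<in> \<aa>\<close> with the same standard part does not change \<open>st\<close>.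
  Conversely write \<open>P = Q + D\<close> with \<open>Q \<in> \<aa>\<close> and \<open>st D = 0\<close>. The Cauchy estimates make the
  bounded internal polynomial \<open>D\<close> S-continuous, so its supremum \<open>M\<^sub>k\<close> over the polydisc of
  radius \<open>k\<close> is infinitesimal for every standard \<open>k\<close>. A diagonal supremum yields one
  infinitesimal \<open>\<delta> \<ge> M\<^sub>k\<close> for all standard \<open>k\<close>, and \<open>D = \<surd>\<delta> \<cdot> (D/\<surd>\<delta>)\<close> is a product of two
  elements of \<open>Inf(A)\<close>.\<close>

section \<open>Evaluation of polynomials\<close>

lemma moneval_eq_prod_UNIV:
  fixes m :: "'n::finite \<Rightarrow>\<^sub>0 nat"
  shows "moneval m x = (\<Prod>j\<in>UNIV. x j ^ Poly_Mapping.lookup m j)"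
  unfolding moneval_def by (rule prod.mono_neutral_left) (auto simp: in_keys_iff)

lemma moneval_add:
  fixes m :: "'n::finite \<Rightarrow>\<^sub>0 nat"
  shows "moneval (m + m') x = moneval m x * moneval m' x"
  by (simp add: moneval_eq_prod_UNIV lookup_add power_add prod.distrib)

lemma moneval_zero [simp]: "moneval 0 x = 1"
  by (simp add: moneval_def)

lemma mpeval_add: "mpeval (p + q) x = mpeval p x + mpeval q x"
  unfolding mpeval_def by (rule setsum_keys_plus_distrib) (auto simp: algebra_simps)

lemma mpeval_zero [simp]: "mpeval 0 x = 0"
  by (simp add: mpeval_def)

lemma mpeval_single [simp]: "mpeval (Poly_Mapping.single m c) x = c * moneval m x"
  by (simp add: mpeval_def)

lemma mpeval_diff: "mpeval (p - q) x = mpeval p x - mpeval q x"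
  using mpeval_add[of "p - q" q x] by (simp add: algebra_simps)

lemma mpeval_sum: "mpeval (\<Sum>k\<in>A. p k) x = (\<Sum>k\<in>A. mpeval (p k) x)"
  by (induction A rule: infinite_finite_induct) (auto simp: mpeval_add)

lemma update_notin_keys_eq_add_single:
  "m \<notin> Poly_Mapping.keys p \<Longrightarrow> Poly_Mapping.update m c p = p + Poly_Mapping.single m c"
  by (rule poly_mapping_eqI) (auto simp: lookup_update lookup_add lookup_single in_keys_iff when_def)

lemma mpeval_single_mult:
  fixes q :: "'n::finite mpoly"
  shows "mpeval (Poly_Mapping.single m c * q) x = c * moneval m x * mpeval q x"
proof (induction q rule: update_induct)
  case (update p m' c')
  then show ?case
    by (simp add: update_notin_keys_eq_add_single distrib_left mpeval_add mult_single moneval_add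
        algebra_simps)
qed simp

lemma mpeval_mult:
  fixes p q :: "'n::finite mpoly"
  shows "mpeval (p * q) x = mpeval p x * mpeval q x"
proof (induction p rule: update_induct)
  case (update p m c)
  then show ?case
    by (simp only: update_notin_keys_eq_add_single[OF update(1)] distrib_right mpeval_add
        mpeval_single_mult update(3)) (simp add: algebra_simps)
qed simp

lemma sum_pred_mult_power_lessThan: "0 < N \<Longrightarrow> (\<Sum>k<T. (N - 1) * N ^ k) = N ^ T - (1::nat)"
proof (induction T)
  case (Suc T)
  then have "1 \<le> N ^ T" by simp
  then show ?case using Suc by (simp add: algebra_simps diff_mult_distrib)
qed simp

lemma digit_of_sum_of_powers:
  fixes d t :: "'a \<Rightarrow> nat"
  assumes fin: "finite A" and inj: "inj_on t A" and digits: "\<forall>j\<in>A. d j < N" and j0: "j0 \<in> A"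
  shows "(\<Sum>j\<in>A. d j * N ^ t j) div N ^ t j0 mod N = d j0"
proof -
  define T where "T = t j0"
  define Low where "Low = {j\<in>A. t j < T}"
  define High where "High = {j\<in>A. T < t j}"
  have N: "0 < N" using digits j0 by auto
  have A: "A = Low \<union> ({j0} \<union> High)"
    using inj j0 by (auto simp: Low_def High_def T_def inj_on_def) (meson linorder_neqE_nat)
  have finite: "finite Low" "finite High" using fin by (auto simp: Low_def High_def)
  define L where "L = (\<Sum>j\<in>Low. d j * N ^ t j)"
  define H where "H = (\<Sum>j\<in>High. d j * N ^ (t j - Suc T))"
  have "(\<Sum>j\<in>High. d j * N ^ t j) = (\<Sum>j\<in>High. N ^ Suc T * (d j * N ^ (t j - Suc T)))"
  proof (rule sum.cong)
    fix j assume "j \<in> High"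
    then have "t j = Suc T + (t j - Suc T)" by (auto simp: High_def)
    then show "d j * N ^ t j = N ^ Suc T * (d j * N ^ (t j - Suc T))"
      by (metis mult.left_commute power_add)
  qed simp
  then have high: "(\<Sum>j\<in>High. d j * N ^ t j) = N ^ Suc T * H"
    by (simp add: H_def sum_distrib_left)
  have "L \<le> (\<Sum>j\<in>Low. (N - 1) * N ^ t j)"
    unfolding L_def by (rule sum_mono) (use digits in \<open>auto simp: Low_def intro!: mult_right_mono\<close>)
  also have "\<dots> = (\<Sum>e\<in>t ` Low. (N - 1) * N ^ e)"
    by (rule sum.reindex[symmetric, unfolded comp_def]) (use inj in \<open>auto simp: Low_def intro: inj_on_subset\<close>)
  also have "\<dots> \<le> (\<Sum>e<T. (N - 1) * N ^ e)"
    by (rule sum_mono2) (auto simp: Low_def)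
  also have "\<dots> = N ^ T - 1"
    using N by (rule sum_pred_mult_power_lessThan)
  finally have "L < N ^ T" using N by (simp add: Suc_le_eq le_diff_conv2)
  have disjoint: "Low \<inter> ({j0} \<union> High) = {}" "{j0} \<inter> High = {}"
    by (auto simp: Low_def High_def T_def)
  have "(\<Sum>j\<in>A. d j * N ^ t j) = L + (d j0 * N ^ T + (\<Sum>j\<in>High. d j * N ^ t j))"
    unfolding L_def T_def
    by (subst A, subst sum.union_disjoint) (use finite disjoint in \<open>auto simp: sum.union_disjoint\<close>)
  then have "(\<Sum>j\<in>A. d j * N ^ t j) = L + (d j0 + N * H) * N ^ T"
    using high by (simp add: algebra_simps)
  then have "(\<Sum>j\<in>A. d j * N ^ t j) div N ^ T = d j0 + N * H"
    using \<open>L < N ^ T\<close> N by simp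
  then show ?thesis using digits j0 T_def by simp
qed

lemma moneval_powers:
  fixes m :: "'n::finite \<Rightarrow>\<^sub>0 nat"
  shows "moneval m (\<lambda>j. z ^ w j) = z ^ (\<Sum>j\<in>UNIV. Poly_Mapping.lookup m j * w j)"
  by (simp add: moneval_eq_prod_UNIV power_sum power_mult[symmetric] mult.commute)

text \<open>Kronecker substitution \<open>X\<^sub>j \<mapsto> z ^ N ^ j\<close>, with \<open>N\<close> exceeding every exponent of \<open>p\<close>, sends
  distinct monomials of \<open>p\<close> to distinct powers of \<open>z\<close>.\<close>

lemma mpoly_eq_0_if_mpeval_eq_0:
  fixes p :: "'n::finite mpoly"
  assumes zero: "\<And>x. mpeval p x = 0"
  shows "p = 0"
proof (rule ccontr)
  assume "p \<noteq> 0"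
  then obtain m0 where m0: "m0 \<in> Poly_Mapping.keys p" by (metis all_not_in_conv keys_eq_empty)
  define K where "K = Poly_Mapping.keys p"
  define N where "N = Suc (Max ((\<lambda>(m, j). Poly_Mapping.lookup m j) ` (K \<times> UNIV)))"
  have digits: "Poly_Mapping.lookup m j < N" if "m \<in> K" for m j
    using that unfolding N_def K_def by (intro le_imp_less_Suc Max_ge) auto
  define e where "e m = (\<Sum>j\<in>UNIV. Poly_Mapping.lookup m j * N ^ to_nat j)" for m :: "'n \<Rightarrow>\<^sub>0 nat"
  have "Poly_Mapping.lookup m j = e m div N ^ to_nat j mod N" if "m \<in> K" for m j
    unfolding e_def by (rule digit_of_sum_of_powers[symmetric]) (use digits that in auto)
  then have inj: "inj_on e K"
    by (intro inj_onI poly_mapping_eqI) metis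
  define q where "q = (\<Sum>m\<in>K. monom (Poly_Mapping.lookup p m) (e m))"
  have "poly q z = mpeval p (\<lambda>j. z ^ N ^ to_nat j)" for z
    by (simp add: q_def poly_sum poly_monom mpeval_def K_def e_def moneval_powers)
  then have "q = 0" using zero poly_all_0_iff_0 by metis
  have "coeff q (e m0) = (\<Sum>m\<in>K. if e m = e m0 then Poly_Mapping.lookup p m else 0)"
    by (simp add: q_def coeff_sum coeff_monom)
  also have "\<dots> = (\<Sum>m\<in>K. if m = m0 then Poly_Mapping.lookup p m else 0)"
    by (rule sum.cong) (use inj m0 in \<open>auto simp: K_def inj_on_def\<close>)
  also have "\<dots> = Poly_Mapping.lookup p m0" using m0 by (simp add: K_def)
  finally show False using \<open>q = 0\<close> m0 by (simp add: in_keys_iff)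
qed

lemma continuous_on_mpeval: "continuous_on S (mpeval p :: ('n::finite \<Rightarrow> complex) \<Rightarrow> complex)"
proof -
  have "continuous_on UNIV (mpeval p :: ('n \<Rightarrow> complex) \<Rightarrow> complex)"
    unfolding mpeval_def[abs_def] moneval_def
    by (intro continuous_intros continuous_on_product_coordinates)
  then show ?thesis using continuous_on_subset by blast
qed

lemma holomorphic_on_mpeval_update: "(\<lambda>z. mpeval p (x(j := z))) holomorphic_on S"
proof -
  have "(\<lambda>z. (x(j := z)) k) holomorphic_on S" for k
    by (cases "k = j") auto
  then show ?thesis
    unfolding mpeval_def moneval_def by (intro holomorphic_intros)
qed

section \<open>Polydiscs and Cauchy estimates\<close>

definition polydisc :: "real \<Rightarrow> ('n::finite \<Rightarrow> complex) set" where
  "polydisc r = {x. \<forall>j. norm (x j) \<le> r}"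

lemma compact_polydisc: "compact (polydisc r :: ('n::finite \<Rightarrow> complex) set)"
proof -
  have "polydisc r = PiE (UNIV :: 'n set) (\<lambda>_. cball 0 r)"
    by (auto simp: polydisc_def PiE_UNIV_domain)
  moreover have "compactin (product_topology (\<lambda>_. euclidean) UNIV)
      (PiE (UNIV :: 'n set) (\<lambda>_. cball (0::complex) r))"
    by (simp add: compactin_PiE)
  ultimately show ?thesis
    by (simp add: euclidean_product_topology compactin_euclidean_iff)
qed

lemma polydisc_mono: "r \<le> s \<Longrightarrow> polydisc r \<subseteq> polydisc s"
  by (auto simp: polydisc_def intro: order_trans)

lemma ex_polydisc_of_nat: "\<exists>k::nat. (x :: 'n::finite \<Rightarrow> complex) \<in> polydisc (real k)"
proof -
  have "x \<in> polydisc (\<Sum>j\<in>UNIV. norm (x j))"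
    by (auto simp: polydisc_def intro!: member_le_sum)
  then show ?thesis using polydisc_mono[OF real_nat_ceiling_ge] by blast
qed

lemma mpeval_attains_max_on_polydisc:
  fixes p :: "'n::finite mpoly"
  assumes "0 \<le> r"
  shows "\<exists>x\<in>polydisc r. \<forall>y\<in>polydisc r. norm (mpeval p y) \<le> norm (mpeval p x)"
proof (rule continuous_attains_sup[OF compact_polydisc])
  show "polydisc r \<noteq> {}" using assms by (auto simp: polydisc_def intro!: exI[of _ "\<lambda>_. 0"])
qed (intro continuous_intros continuous_on_mpeval)

definition polydisc_sup :: "'n::finite mpoly \<Rightarrow> real \<Rightarrow> real" where
  "polydisc_sup p r = (SUP y\<in>polydisc r. norm (mpeval p y))"

lemma polydisc_sup_attained:
  assumes "0 \<le> r"
  shows "\<exists>x\<in>polydisc r. polydisc_sup p r = norm (mpeval p x)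
    \<and> (\<forall>y\<in>polydisc r. norm (mpeval p y) \<le> polydisc_sup p r)"
proof -
  obtain x where x: "x \<in> polydisc r" "\<forall>y\<in>polydisc r. norm (mpeval p y) \<le> norm (mpeval p x)"
    using mpeval_attains_max_on_polydisc[OF assms] by blast
  then have "polydisc_sup p r = norm (mpeval p x)"
    unfolding polydisc_sup_def by (intro cSup_eq_maximum) auto
  then show ?thesis using x by auto
qed

lemma norm_mpeval_le_polydisc_sup:
  assumes "y \<in> polydisc r"
  shows "norm (mpeval p y) \<le> polydisc_sup p r"
proof -
  have "0 \<le> norm (y undefined)" by simp
  also have "\<dots> \<le> r" using assms by (simp add: polydisc_def)
  finally have "0 \<le> r" .
  then show ?thesis using polydisc_sup_attained[of r p] assms by auto
qed

lemma polydisc_sup_mono: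
  assumes "0 \<le> r" "r \<le> s"
  shows "polydisc_sup p r \<le> polydisc_sup p s"
proof -
  obtain x where x: "x \<in> polydisc r" "polydisc_sup p r = norm (mpeval p x)"
    using polydisc_sup_attained[OF assms(1), of p] by (elim bexE conjE) simp
  have "x \<in> polydisc s" using polydisc_mono[OF assms(2)] x(1) by blast
  then have "norm (mpeval p x) \<le> polydisc_sup p s" by (rule norm_mpeval_le_polydisc_sup)
  then show ?thesis using x(2) by simp
qed

lemma holomorphic_lipschitz_on_cball:
  fixes f :: "complex \<Rightarrow> complex"
  assumes f: "f holomorphic_on UNIV" and bound: "\<forall>u\<in>cball 0 (r + 1). norm (f u) \<le> B"
    and a: "a \<in> cball 0 r" and b: "b \<in> cball 0 r"
  shows "norm (f a - f b) \<le> B * norm (a - b)"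
proof (rule field_differentiable_bound[of "cball 0 r" f "deriv f"])
  fix w assume w: "w \<in> cball (0::complex) r"
  show "(f has_field_derivative deriv f w) (at w within cball 0 r)"
    by (rule holomorphic_derivI[OF f]) auto
  have "norm ((deriv ^^ 1) f w) \<le> fact 1 * B / 1 ^ 1"
  proof (rule Cauchy_inequality)
    show "f holomorphic_on ball w 1" using f holomorphic_on_subset by blast
    show "continuous_on (cball w 1) f"
      using f holomorphic_on_imp_continuous_on continuous_on_subset by blast
    fix u assume "norm (w - u) = 1"
    then have "u \<in> cball 0 (r + 1)"
      using w norm_triangle_sub[of u w] by (simp add: norm_minus_commute)
    then show "norm (f u) \<le> B" using bound by blast
  qed simp
  then show "norm (deriv f w) \<le> B" by simp
qed (use a b in auto)

text \<open>Change one coordinate at a time and apply the one-variable estimate to each slice.\<close>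

lemma separately_holomorphic_lipschitz_on_polydisc:
  fixes f :: "('n::finite \<Rightarrow> complex) \<Rightarrow> complex"
  assumes holo: "\<And>x j. (\<lambda>z. f (x(j := z))) holomorphic_on UNIV"
    and bound: "\<forall>y\<in>polydisc (r + 1). norm (f y) \<le> B"
    and x: "x \<in> polydisc r" and y: "y \<in> polydisc r"
  shows "norm (f y - f x) \<le> B * (\<Sum>j\<in>UNIV. norm (y j - x j))"
proof -
  define z where "z S = (\<lambda>j. if j \<in> S then y j else x j)" for S
  have slice_bound: "\<forall>u\<in>cball 0 (r + 1). norm (f ((z S)(k := u))) \<le> B" for S k
  proof
    fix u :: complex assume "u \<in> cball 0 (r + 1)"
    then have "(z S)(k := u) \<in> polydisc (r + 1)"
      using x y by (auto simp: z_def polydisc_def) (smt (verit))+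
    then show "norm (f ((z S)(k := u))) \<le> B" using bound by blast
  qed
  have "norm (f (z S) - f x) \<le> B * (\<Sum>j\<in>S. norm (y j - x j))" if "finite S" for S
    using that
  proof (induction S rule: finite_induct)
    case (insert k S)
    have upd: "z (insert k S) = (z S)(k := y k)" "z S = (z S)(k := x k)"
      using insert.hyps by (auto simp: z_def)
    have "norm (f ((z S)(k := y k)) - f ((z S)(k := x k))) \<le> B * norm (y k - x k)"
      by (rule holomorphic_lipschitz_on_cball[OF holo slice_bound]) (use x y in \<open>auto simp: polydisc_def\<close>)
    then have "norm (f (z (insert k S)) - f (z S)) \<le> B * norm (y k - x k)"
      by (metis upd)
    then show ?case
      using insert norm_triangle_le[of "f (z (insert k S)) - f (z S)" "f (z S) - f x"]
      by (simp add: distrib_left)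
  qed (simp add: z_def)
  moreover have "z UNIV = y" by (simp add: z_def)
  ultimately show ?thesis by (metis finite)
qed

section \<open>Bounded elements and standard parts\<close>

lemma ultrafilter_tendsto_Lim:
  assumes U: "free_ultrafilter U" and z: "bounded_elt U z"
  shows "(z \<longlongrightarrow> Lim U z) U"
proof -
  obtain r where r: "eventually (\<lambda>i. norm (z i) \<le> r) U" using z by (auto simp: bounded_elt_def)
  define F where "F = filtermap z U"
  have "F \<noteq> bot" using U by (simp add: F_def filtermap_bot_iff free_ultrafilter_def)
  moreover have "eventually (\<lambda>w. w \<in> cball 0 r) F"
    using r by (simp add: F_def eventually_filtermap)
  ultimately obtain l where l: "inf (nhds l) F \<noteq> bot"
    using compact_filter[THEN iffD1, OF compact_cball] by blast
  have "(z \<longlongrightarrow> l) U"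
  proof (rule topological_tendstoI)
    fix S :: "complex set" assume S: "open S" "l \<in> S"
    show "eventually (\<lambda>i. z i \<in> S) U"
    proof (rule ccontr)
      assume "\<not> eventually (\<lambda>i. z i \<in> S) U"
      then have "eventually (\<lambda>w. w \<notin> S) F"
        using U by (auto simp: F_def eventually_filtermap free_ultrafilter_def)
      moreover have "eventually (\<lambda>w. w \<in> S) (nhds l)" using S eventually_nhds by blast
      ultimately have "eventually (\<lambda>_. False) (inf (nhds l) F)"
        unfolding eventually_inf by blast
      then show False using l by (simp add: eventually_False)
    qed
  qed
  moreover have "U \<noteq> bot" using U by (simp add: free_ultrafilter_def)
  ultimately show ?thesis using tendsto_Lim by metis
qed

lemma bounded_elt_add: "bounded_elt U z \<Longrightarrow> bounded_elt U w \<Longrightarrow> bounded_elt U (\<lambda>i. z i + w i)"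
  unfolding bounded_elt_def
proof (elim exE)
  fix r s assume "eventually (\<lambda>i. norm (z i) \<le> r) U" "eventually (\<lambda>i. norm (w i) \<le> s) U"
  then have "eventually (\<lambda>i. norm (z i + w i) \<le> r + s) U"
    by eventually_elim (meson add_mono norm_triangle_ineq order_trans)
  then show "\<exists>r. eventually (\<lambda>i. norm (z i + w i) \<le> r) U" by blast
qed

lemma bounded_elt_diff: "bounded_elt U z \<Longrightarrow> bounded_elt U w \<Longrightarrow> bounded_elt U (\<lambda>i. z i - w i)"
  using bounded_elt_add[of U z "\<lambda>i. - w i"] by (simp add: bounded_elt_def)

lemma bpoly_diff: "P \<in> bpoly U \<Longrightarrow> Q \<in> bpoly U \<Longrightarrow> (\<lambda>i. P i - Q i) \<in> bpoly U"
  unfolding bpoly_def by (auto simp: mpeval_diff intro!: bounded_elt_diff)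

lemma bounded_pt_const: "bounded_pt U (\<lambda>i. x)"
  unfolding bounded_pt_def bounded_elt_def
proof
  fix j show "\<exists>r. eventually (\<lambda>i. norm (x j) \<le> r) U"
    by (rule exI[of _ "norm (x j)"]) simp
qed

lemma bounded_pt_if_polydisc: "(\<And>i. x i \<in> polydisc r) \<Longrightarrow> bounded_pt U x"
  unfolding bounded_pt_def bounded_elt_def polydisc_def by (auto intro: exI[of _ r])

lemma bounded_pt_eventually_polydisc:
  fixes x :: "'i \<Rightarrow> 'n::finite \<Rightarrow> complex"
  assumes "bounded_pt U x"
  shows "\<exists>k::nat. eventually (\<lambda>i. x i \<in> polydisc (real k)) U"
proof -
  have "\<forall>j. \<exists>r. eventually (\<lambda>i. norm (x i j) \<le> r) U"
    using assms by (simp add: bounded_pt_def bounded_elt_def)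
  then obtain R where R: "\<And>j. eventually (\<lambda>i. norm (x i j) \<le> R j) U" by metis
  define k where "k = nat \<lceil>\<Sum>j\<in>UNIV. \<bar>R j\<bar>\<rceil>"
  have "R j \<le> real k" for j
  proof -
    have "\<bar>R j\<bar> \<le> (\<Sum>j\<in>UNIV. \<bar>R j\<bar>)" by (rule member_le_sum) auto
    then show ?thesis unfolding k_def using real_nat_ceiling_ge[of "\<Sum>j\<in>UNIV. \<bar>R j\<bar>"] by linarith
  qed
  then have "eventually (\<lambda>i. norm (x i j) \<le> real k) U" for j
    using R[of j] by (elim eventually_mono) (meson order_trans)
  then have "eventually (\<lambda>i. \<forall>j. norm (x i j) \<le> real k) U"
    by (rule eventually_all_finite)
  then show ?thesis by (auto simp: polydisc_def)
qed

lemma tendsto_mpeval_st_poly: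
  assumes U: "free_ultrafilter U" and P: "P \<in> bpoly U"
  shows "((\<lambda>i. mpeval (P i) x) \<longlongrightarrow> st_poly U P x) U"
  unfolding st_poly_def
  by (rule ultrafilter_tendsto_Lim[OF U]) (use P bounded_pt_const in \<open>auto simp: bpoly_def\<close>)

lemma st_poly_eqI:
  assumes U: "free_ultrafilter U" and "((\<lambda>i. mpeval (P i) x) \<longlongrightarrow> l) U"
  shows "st_poly U P x = l"
  using assms tendsto_Lim by (auto simp: st_poly_def free_ultrafilter_def)

section \<open>Infinitesimal internal polynomials\<close>

lemma polydisc_sup_attained_at_bounded_pt:
  fixes D :: "'i \<Rightarrow> 'n::finite mpoly"
  assumes "0 \<le> r"
  obtains z where "bounded_pt U z" "\<And>i. polydisc_sup (D i) r = norm (mpeval (D i) (z i))"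
proof -
  have "\<forall>i. \<exists>x. x \<in> polydisc r \<and> polydisc_sup (D i) r = norm (mpeval (D i) x)"
    using polydisc_sup_attained[OF assms] by blast
  then obtain z where z: "\<And>i. z i \<in> polydisc r" "\<And>i. polydisc_sup (D i) r = norm (mpeval (D i) (z i))"
    by metis
  have "bounded_pt U z" by (rule bounded_pt_if_polydisc) (rule z(1))
  then show ?thesis using that z(2) by blast
qed

lemma bpoly_polydisc_sup_bounded:
  fixes D :: "'i \<Rightarrow> 'n::finite mpoly"
  assumes D: "D \<in> bpoly U" and r: "0 \<le> r"
  shows "\<exists>B. eventually (\<lambda>i. polydisc_sup (D i) r \<le> B) U"
proof -
  obtain z where z: "bounded_pt U z" "\<And>i. polydisc_sup (D i) r = norm (mpeval (D i) (z i))"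
    using polydisc_sup_attained_at_bounded_pt[OF r] by metis
  then have "bounded_elt U (\<lambda>i. mpeval (D i) (z i))" using D by (auto simp: bpoly_def)
  then show ?thesis by (simp add: z(2) bounded_elt_def)
qed

text \<open>S-continuity: the uniform bound on a slightly larger polydisc makes \<open>D\<^sub>i\<close> Lipschitz with a
  bounded constant near the standard part of \<open>x\<close>.\<close>

lemma bpoly_tendsto_0_at_bounded_pt:
  fixes D :: "'i \<Rightarrow> 'n::finite mpoly"
  assumes U: "free_ultrafilter U" and D: "D \<in> bpoly U" and st: "st_poly U D = (\<lambda>x. 0)"
    and x: "bounded_pt U x"
  shows "((\<lambda>i. mpeval (D i) (x i)) \<longlongrightarrow> 0) U"
proof -
  define y where "y j = Lim U (\<lambda>i. x i j)" for j
  have x_y: "((\<lambda>i. x i j) \<longlongrightarrow> y j) U" for j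
    unfolding y_def by (rule ultrafilter_tendsto_Lim[OF U]) (use x in \<open>auto simp: bounded_pt_def\<close>)
  obtain k :: nat where k: "eventually (\<lambda>i. x i \<in> polydisc (real k)) U"
    using bounded_pt_eventually_polydisc[OF x] by blast
  obtain l :: nat where l: "y \<in> polydisc (real l)" using ex_polydisc_of_nat by blast
  define r where "r = real (max k l)"
  have y: "y \<in> polydisc r" and x: "eventually (\<lambda>i. x i \<in> polydisc r) U"
    using l k polydisc_mono[of "real l" r] polydisc_mono[of "real k" r]
    by (auto simp: r_def elim!: eventually_mono)
  obtain B where "eventually (\<lambda>i. polydisc_sup (D i) (r + 1) \<le> B) U"
    using bpoly_polydisc_sup_bounded[OF D, of "r + 1"] by (auto simp: r_def)
  then have B: "eventually (\<lambda>i. \<forall>y\<in>polydisc (r + 1). norm (mpeval (D i) y) \<le> B) U"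
    by (elim eventually_mono) (meson norm_mpeval_le_polydisc_sup order_trans)
  have "eventually (\<lambda>i. norm (mpeval (D i) (x i)) \<le>
      B * (\<Sum>j\<in>UNIV. norm (x i j - y j)) + norm (mpeval (D i) y)) U"
    using x B
  proof eventually_elim
    case (elim i)
    then have "norm (mpeval (D i) (x i) - mpeval (D i) y) \<le> B * (\<Sum>j\<in>UNIV. norm (x i j - y j))"
      using separately_holomorphic_lipschitz_on_polydisc[OF holomorphic_on_mpeval_update _ y]
      by blast
    then show ?case using norm_triangle_sub[of "mpeval (D i) (x i)" "mpeval (D i) y"] by simp
  qed
  moreover have "((\<lambda>i. mpeval (D i) y) \<longlongrightarrow> 0) U"
    using tendsto_mpeval_st_poly[OF U D, of y] st by simp
  then have "((\<lambda>i. B * (\<Sum>j\<in>UNIV. norm (x i j - y j)) + norm (mpeval (D i) y)) \<longlongrightarrow> 0) U"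
    using tendsto_intros(1)[of "B * (\<Sum>j\<in>UNIV. norm (y j - y j))"]
    by (auto intro!: tendsto_eq_intros x_y)
  ultimately show ?thesis by (rule Lim_null_comparison)
qed

text \<open>For standard \<open>k\<close>, \<open>M i k\<close> eventually drops below \<open>1/(k+1)\<close> and so is dominated by the
  diagonal supremum \<open>\<delta> i\<close>; the indices \<open>k > K\<close> contribute at most \<open>1/(K+1)\<close> to it.\<close>

lemma tendsto_0_dominating_diagonal:
  fixes M :: "'i \<Rightarrow> nat \<Rightarrow> real"
  assumes nonneg: "\<And>i k. 0 \<le> M i k" and mono: "\<And>i. mono (M i)"
    and lim: "\<And>k. ((\<lambda>i. M i k) \<longlongrightarrow> 0) F"
  obtains \<delta> where "(\<delta> \<longlongrightarrow> 0) F" "\<And>i. 0 \<le> \<delta> i" "\<And>i. \<delta> i \<le> 1"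
    "\<And>k. eventually (\<lambda>i. M i k \<le> \<delta> i) F" "\<And>i k. \<delta> i = 0 \<Longrightarrow> M i k = 0"
proof
  define \<delta> where "\<delta> i = (SUP k. min (M i k) (1 / real (Suc k)))" for i
  have bdd: "bdd_above (range (\<lambda>k. min (M i k) (1 / real (Suc k))))" for i
    by (rule bdd_aboveI[of _ 1]) (auto simp: min_le_iff_disj)
  have ge: "min (M i k) (1 / real (Suc k)) \<le> \<delta> i" for i k
    unfolding \<delta>_def by (rule cSUP_upper[OF _ bdd]) auto
  show nonneg_\<delta>: "0 \<le> \<delta> i" for i
    using ge[of i 0] nonneg[of i 0] by simp
  show "\<delta> i \<le> 1" for i
    unfolding \<delta>_def by (rule cSUP_least) (auto simp: min_le_iff_disj)
  show "eventually (\<lambda>i. M i k \<le> \<delta> i) F" for k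
  proof -
    have "eventually (\<lambda>i. M i k < 1 / real (Suc k)) F" by (rule order_tendstoD(2)[OF lim]) simp
    then show ?thesis by (elim eventually_mono) (metis ge less_imp_le min.absorb1)
  qed
  show "M i k = 0" if "\<delta> i = 0" for i k
    using ge[of i k] that nonneg[of i k] by (simp add: min_le_iff_disj)
  show "(\<delta> \<longlongrightarrow> 0) F"
  proof (rule tendstoI)
    fix e :: real assume e: "0 < e"
    obtain K :: nat where K: "inverse (real (Suc K)) < e" using reals_Archimedean[OF e] by blast
    have bound: "\<delta> i \<le> max (M i K) (1 / real (Suc K))" for i
      unfolding \<delta>_def
    proof (rule cSUP_least)
      fix k
      show "min (M i k) (1 / real (Suc k)) \<le> max (M i K) (1 / real (Suc K))"
      proof (cases "k \<le> K")
        case True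
        then show ?thesis using mono[of i] by (auto simp: mono_def min_le_iff_disj le_max_iff_disj)
      next
        case False
        then have "1 / real (Suc k) \<le> 1 / real (Suc K)" by (simp add: frac_le)
        then show ?thesis by (simp add: min_le_iff_disj le_max_iff_disj)
      qed
    qed simp
    have "\<delta> i < e" if "M i K < e" for i
    proof -
      have "max (M i K) (1 / real (Suc K)) < e" using that K by (simp add: inverse_eq_divide)
      then show ?thesis using bound[of i] by linarith
    qed
    then show "eventually (\<lambda>i. dist (\<delta> i) 0 < e) F"
      using order_tendstoD(2)[OF lim e, of K] nonneg_\<delta> by (elim eventually_mono) simp
  qed
qed

text \<open>\<open>D = \<surd>\<delta> \<cdot> (D/\<surd>\<delta>)\<close>; the hypothesis on the zeros of \<open>\<delta>\<close> handles the indices where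
  \<open>\<surd>\<delta>\<close> is not invertible (there \<open>inverse 0 = 0\<close>).\<close>

lemma bpoly_factor_if_dominated:
  fixes D :: "'i \<Rightarrow> 'n::finite mpoly"
  assumes U: "free_ultrafilter U" and \<delta>: "(\<delta> \<longlongrightarrow> 0) U" "\<And>i. 0 \<le> \<delta> i" "\<And>i. \<delta> i \<le> 1"
    and dom: "\<And>k::nat. eventually (\<lambda>i. \<forall>y\<in>polydisc (real k). norm (mpeval (D i) y) \<le> \<delta> i) U"
    and zero: "\<And>i. \<delta> i = 0 \<Longrightarrow> D i = 0"
  obtains F G where "F \<in> bpoly U" "G \<in> bpoly U" "st_poly U F = (\<lambda>x. 0)" "st_poly U G = (\<lambda>x. 0)"
    "\<And>i. F i * G i = D i"
proof
  define \<epsilon> where "\<epsilon> i = sqrt (\<delta> i)" for i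
  define F where "F i = (Poly_Mapping.single 0 (complex_of_real (\<epsilon> i)) :: 'n mpoly)" for i
  define G where "G i = Poly_Mapping.single 0 (complex_of_real (inverse (\<epsilon> i))) * D i" for i
  have \<epsilon>: "0 \<le> \<epsilon> i" "\<epsilon> i \<le> 1" for i using \<delta> by (auto simp: \<epsilon>_def)
  have \<epsilon>_lim: "(\<epsilon> \<longlongrightarrow> 0) U"
    using tendsto_real_sqrt[OF \<delta>(1)] by (simp add: \<epsilon>_def[abs_def])
  have G_bound: "eventually (\<lambda>i. norm (mpeval (G i) (x i)) \<le> \<epsilon> i) U" if x: "bounded_pt U x" for x
  proof -
    obtain k :: nat where "eventually (\<lambda>i. x i \<in> polydisc (real k)) U"
      using bounded_pt_eventually_polydisc[OF x] by blast
    with dom[of k] show ?thesis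
    proof eventually_elim
      case (elim i)
      then have "inverse (\<epsilon> i) * norm (mpeval (D i) (x i)) \<le> inverse (\<epsilon> i) * \<epsilon> i ^ 2"
        using \<delta>(2) by (intro mult_left_mono) (auto simp: \<epsilon>_def)
      also have "\<dots> = \<epsilon> i" by (cases "\<epsilon> i = 0") (auto simp: power2_eq_square)
      finally show ?case
        using \<epsilon> by (simp add: G_def mpeval_mult norm_mult norm_inverse)
    qed
  qed
  show "F i * G i = D i" for i
  proof (cases "\<epsilon> i = 0")
    case True
    then show ?thesis using zero \<delta>(2) by (simp add: G_def \<epsilon>_def)
  next
    case False
    then show ?thesis
      by (simp add: F_def G_def mult.assoc[symmetric] mult_single flip: of_real_mult)
  qed
  show "F \<in> bpoly U"
    using \<epsilon> by (auto simp: F_def bpoly_def bounded_elt_def intro!: exI[of _ 1])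
  show "st_poly U F = (\<lambda>x. 0)"
    using tendsto_of_real[OF \<epsilon>_lim, where 'a=complex] by (auto simp: F_def intro!: st_poly_eqI[OF U])
  show "G \<in> bpoly U"
    using G_bound \<epsilon>(2) unfolding bpoly_def bounded_elt_def
    by (blast intro: eventually_mono order_trans)
  show "st_poly U G = (\<lambda>x. 0)"
    using G_bound[OF bounded_pt_const] \<epsilon>_lim
    by (auto intro!: st_poly_eqI[OF U] Lim_null_comparison)
qed

lemma bpoly_infinitesimal_factor:
  fixes D :: "'i \<Rightarrow> 'n::finite mpoly"
  assumes U: "free_ultrafilter U" and D: "D \<in> bpoly U" and st: "st_poly U D = (\<lambda>x. 0)"
  obtains F G where "F \<in> bpoly U" "G \<in> bpoly U" "st_poly U F = (\<lambda>x. 0)" "st_poly U G = (\<lambda>x. 0)"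
    "\<And>i. F i * G i = D i"
proof -
  define M where "M i k = polydisc_sup (D i) (real k)" for i k
  have M_bound: "norm (mpeval (D i) y) \<le> M i k" if "y \<in> polydisc (real k)" for i k y
    using that by (simp add: M_def norm_mpeval_le_polydisc_sup)
  have M_nonneg: "0 \<le> M i k" for i k
    using polydisc_sup_attained[of "real k" "D i"] by (auto simp: M_def)
  have M_mono: "mono (M i)" for i
    by (auto simp: mono_def M_def intro: polydisc_sup_mono)
  have M_lim: "((\<lambda>i. M i k) \<longlongrightarrow> 0) U" for k
  proof -
    obtain z where z: "bounded_pt U z" "\<And>i. M i k = norm (mpeval (D i) (z i))"
      using polydisc_sup_attained_at_bounded_pt[of "real k"] unfolding M_def by (metis of_nat_0_le_iff)
    then show ?thesis
      using bpoly_tendsto_0_at_bounded_pt[OF U D st]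
      by (simp add: z(2) tendsto_norm_zero)
  qed
  obtain \<delta> where \<delta>: "(\<delta> \<longlongrightarrow> 0) U" "\<And>i. 0 \<le> \<delta> i" "\<And>i. \<delta> i \<le> 1"
    and dom: "\<And>k. eventually (\<lambda>i. M i k \<le> \<delta> i) U" and zero: "\<And>i k. \<delta> i = 0 \<Longrightarrow> M i k = 0"
    using tendsto_0_dominating_diagonal[OF M_nonneg M_mono M_lim] by blast
  have D_dom: "eventually (\<lambda>i. \<forall>y\<in>polydisc (real k). norm (mpeval (D i) y) \<le> \<delta> i) U" for k
    using dom[of k] by (elim eventually_mono) (meson M_bound order_trans)
  have D_zero: "D i = 0" if "\<delta> i = 0" for i
  proof (rule mpoly_eq_0_if_mpeval_eq_0)
    fix y :: "'n \<Rightarrow> complex"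
    obtain k :: nat where "y \<in> polydisc (real k)" using ex_polydisc_of_nat by blast
    then have "norm (mpeval (D i) y) \<le> 0" using M_bound zero[OF that] by metis
    then show "mpeval (D i) y = 0" by simp
  qed
  show ?thesis using bpoly_factor_if_dominated[OF U \<delta> D_dom D_zero] that by blast
qed

section \<open>The square of \<open>Inf(A)\<close>\<close>

lemma inf_rep_saturated:
  assumes "saturated U a"
  shows "inf_rep U a = {P \<in> bpoly U. \<exists>Q\<in>a. st_poly U P = st_poly U Q}"
  using assms by (auto simp: inf_rep_def saturated_def)

lemma bideal_add_sum_mult:
  fixes m :: nat
  assumes a: "bideal U a" and A0: "A0 \<in> a"
    and RA: "\<And>k. k < m \<Longrightarrow> R k \<in> bpoly U \<and> A k \<in> a"
  shows "(\<lambda>i. A0 i + (\<Sum>k<m. R k i * A k i)) \<in> a"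
  using RA
proof (induction m)
  case (Suc m)
  then have "(\<lambda>i. A0 i + (\<Sum>k<m. R k i * A k i)) \<in> a" "(\<lambda>i. R m i * A m i) \<in> a"
    using a by (auto simp: bideal_def)
  then have "(\<lambda>i. (A0 i + (\<Sum>k<m. R k i * A k i)) + R m i * A m i) \<in> a"
    using a by (simp add: bideal_def)
  then show ?case by (simp add: add.assoc)
qed (simp add: A0)

lemma ideal_prod_mult: "F \<in> I \<Longrightarrow> G \<in> J \<Longrightarrow> (\<lambda>i. F i * G i) \<in> ideal_prod I J"
  unfolding ideal_prod_def by (rule CollectI, rule exI[of _ 1]) auto

lemma mem_inf_rep_if_mod_ideal_prod:
  assumes U: "free_ultrafilter U" and a: "bideal U a" and sat: "saturated U a"
    and P: "P \<in> bpoly U" and S: "S \<in> ideal_prod (inf_rep U a) (inf_rep U a)"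
    and PS: "(\<lambda>i. P i - S i) \<in> a"
  shows "P \<in> inf_rep U a"
proof -
  note inf_rep = inf_rep_saturated[OF sat]
  have a_bpoly: "a \<subseteq> bpoly U" using a by (simp add: bideal_def)
  obtain m :: nat and Q R where S_eq: "S = (\<lambda>i. \<Sum>k<m. Q k i * R k i)"
    and Q: "\<And>k. k < m \<Longrightarrow> Q k \<in> inf_rep U a" and R: "\<And>k. k < m \<Longrightarrow> R k \<in> inf_rep U a"
    using S unfolding ideal_prod_def by blast
  have "\<forall>k. \<exists>B. k < m \<longrightarrow> B \<in> a \<and> st_poly U B = st_poly U (Q k)"
    using Q unfolding inf_rep by (auto simp: eq_commute)
  then obtain A where A: "\<And>k. k < m \<Longrightarrow> A k \<in> a \<and> st_poly U (A k) = st_poly U (Q k)"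
    by metis
  define T where "T i = (P i - S i) + (\<Sum>k<m. R k i * A k i)" for i
  have "T \<in> a"
    unfolding T_def using R A by (intro bideal_add_sum_mult[OF a PS]) (auto simp: inf_rep_def)
  moreover have "st_poly U P = st_poly U T"
  proof
    fix x
    have bpoly: "Q k \<in> bpoly U" "R k \<in> bpoly U" "A k \<in> bpoly U" if "k < m" for k
      using Q[OF that] R[OF that] A[OF that] a_bpoly by (auto simp: inf_rep_def)
    have lim_A: "((\<lambda>i. mpeval (A k i) x) \<longlongrightarrow> st_poly U (Q k) x) U" if "k < m" for k
      using tendsto_mpeval_st_poly[OF U bpoly(3)[OF that]] A[OF that] by simp
    have "((\<lambda>i. \<Sum>k<m. mpeval (Q k i) x * mpeval (R k i) x)
        \<longlongrightarrow> (\<Sum>k<m. st_poly U (Q k) x * st_poly U (R k) x)) U"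
      by (intro tendsto_sum tendsto_mult) (auto intro: tendsto_mpeval_st_poly[OF U] bpoly)
    moreover have "((\<lambda>i. \<Sum>k<m. mpeval (R k i) x * mpeval (A k i) x)
        \<longlongrightarrow> (\<Sum>k<m. st_poly U (R k) x * st_poly U (Q k) x)) U"
      by (intro tendsto_sum tendsto_mult) (auto intro: tendsto_mpeval_st_poly[OF U] bpoly lim_A)
    ultimately have "((\<lambda>i. mpeval (T i) x) \<longlongrightarrow> st_poly U P x
        - (\<Sum>k<m. st_poly U (Q k) x * st_poly U (R k) x)
        + (\<Sum>k<m. st_poly U (R k) x * st_poly U (Q k) x)) U"
      unfolding T_def S_eq mpeval_add mpeval_diff mpeval_sum mpeval_mult
      by (intro tendsto_add tendsto_diff tendsto_mpeval_st_poly[OF U P])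
    then show "st_poly U P x = st_poly U T x"
      by (intro st_poly_eqI[OF U, symmetric]) (simp add: mult.commute)
  qed
  ultimately show ?thesis unfolding inf_rep using P by auto
qed

lemma inf_rep_mod_ideal_prod:
  assumes U: "free_ultrafilter U" and a: "bideal U a" and sat: "saturated U a"
    and P: "P \<in> inf_rep U a"
  shows "\<exists>S \<in> ideal_prod (inf_rep U a) (inf_rep U a). (\<lambda>i. P i - S i) \<in> a"
proof -
  note inf_rep = inf_rep_saturated[OF sat]
  obtain Q where Q: "Q \<in> a" and PQ: "st_poly U P = st_poly U Q" using P inf_rep by blast
  define D where "D i = P i - Q i" for i
  have P_bpoly: "P \<in> bpoly U" using P by (simp add: inf_rep_def)
  have Q_bpoly: "Q \<in> bpoly U" using Q a by (auto simp: bideal_def)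
  have D: "D \<in> bpoly U" unfolding D_def by (rule bpoly_diff[OF P_bpoly Q_bpoly])
  have "st_poly U D = (\<lambda>x. 0)"
  proof
    fix x
    show "st_poly U D x = 0"
      using tendsto_diff[OF tendsto_mpeval_st_poly[OF U P_bpoly, of x] tendsto_mpeval_st_poly[OF U Q_bpoly, of x]]
      by (intro st_poly_eqI[OF U]) (simp add: D_def mpeval_diff PQ)
  qed
  then obtain F G where F: "F \<in> bpoly U" "st_poly U F = (\<lambda>x. 0)"
    and G: "G \<in> bpoly U" "st_poly U G = (\<lambda>x. 0)" and FG: "\<And>i. F i * G i = D i"
    using bpoly_infinitesimal_factor[OF U D] by metis
  have zero: "(\<lambda>i. 0) \<in> a" using a by (simp add: bideal_def)
  have st_zero: "st_poly U (\<lambda>i. 0) = (\<lambda>x. 0)" by (rule ext, rule st_poly_eqI[OF U]) simp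
  have "F \<in> inf_rep U a" "G \<in> inf_rep U a"
    unfolding inf_rep
    by (intro CollectI conjI bexI[of _ "\<lambda>i. 0"] F(1) G(1) zero; simp add: F(2) G(2) st_zero)+
  then have "(\<lambda>i. F i * G i) \<in> ideal_prod (inf_rep U a) (inf_rep U a)"
    by (rule ideal_prod_mult)
  then have "D \<in> ideal_prod (inf_rep U a) (inf_rep U a)"
    by (simp add: FG)
  moreover have "(\<lambda>i. P i - D i) \<in> a" using Q by (simp add: D_def)
  ultimately show ?thesis by blast
qed

theorem lemma6p4:
  fixes U :: "'i filter" and a :: "('i \<Rightarrow> ('n::finite) mpoly) set"
  assumes "free_ultrafilter U"
    and "bideal U a"
    and "saturated U a"
  shows "{P \<in> bpoly U. \<exists>S \<in> ideal_prod (inf_rep U a) (inf_rep U a). (\<lambda>i. P i - S i) \<in> a}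
         = inf_rep U a"
proof (intro set_eqI iffI)
  fix P assume "P \<in> {P \<in> bpoly U. \<exists>S \<in> ideal_prod (inf_rep U a) (inf_rep U a). (\<lambda>i. P i - S i) \<in> a}"
  then obtain S where "P \<in> bpoly U" "S \<in> ideal_prod (inf_rep U a) (inf_rep U a)"
    "(\<lambda>i. P i - S i) \<in> a" by blast
  then show "P \<in> inf_rep U a" by (rule mem_inf_rep_if_mod_ideal_prod[OF assms])
next
  fix P assume P: "P \<in> inf_rep U a"
  then have "P \<in> bpoly U" by (simp add: inf_rep_def)
  with inf_rep_mod_ideal_prod[OF assms P]
  show "P \<in> {P \<in> bpoly U. \<exists>S \<in> ideal_prod (inf_rep U a) (inf_rep U a). (\<lambda>i. P i - S i) \<in> a}"
    by simp
qed

end
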